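(* Consider the model below with $M=M_f=N=1$ (full-information rational expectations) and $\epsilon_2\ge 0$, and fix all parameters other than $\epsilon_1$. Then there exists $\bar{\epsilon}_{REE}\in[-\infty,\infty)$, depending only on $(\beta,\sigma,\lambda,\mu,\psi,p,q,\epsilon_2)$, such that for every $\epsilon_1\in\mathbb{R}$ a rational expectations equilibrium (REE) exists if and only if $\epsilon_1\ge\bar{\epsilon}_{REE}$.
   Context: Parameters: $0<\beta<1$, $\sigma>0$, $\lambda>0$, $\mu>0$, $\psi>1$, $p,q\in(0,1]$. The demand shock $\epsilon_t$ is a two-state Markov chain on $\{\epsilon_1,\epsilon_2\}\subset\mathbb{R}$ with $\Pr(\epsilon_{t+1}=\epsilon_1\mid\epsilon_t=\epsilon_1)=p$, $\Pr(\epsilon_{t+1}=\epsilon_2\mid\epsilon_t=\epsilon_2)=q$. The model (with discount parameters $M,M_f,N\in(0,1]$) is $x_t=M\hat E_t x_{t+1}-\sigma(i_t-N\hat E_t\pi_{t+1})+\epsilon_t$, $\pi_t=\lambda x_t+M_f\beta\hat E_t\pi_{t+1}$, $i_t=\max\{\psi\pi_t,-\mu\}$, where $x_t$ is the output gap, $\pi_t$ inflation, $i_t$ the nominal rate. An REE (with $M=M_f=N=1$) is a pair $Y_j=(x_j,\pi_j)\in\mathbb{R}^2$, $j=1,2$ (the values of $(x_t,\pi_t)$ when $\epsilon_t=\epsilon_j$), such that for $j=1,2$, with $i_j=\max\{\psi\pi_j,-\mu\}$: $x_j=x^e_j-\sigma(i_j-\pi^e_j)+\epsilon_j$ and $\pi_j=\lambda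 x_j+\beta\pi^e_j$, where $(x^e_1,\pi^e_1)=pY_1+(1-p)Y_2$ and $(x^e_2,\pi^e_2)=(1-q)Y_1+qY_2$ (the Markov conditional expectations). *)

theory Defs
  imports Complex_Main "HOL-Library.Extended_Real"
begin

text \<open>REE of the two-state model with M = M_f = N = 1.
  State j has values (x_j, pi_j); nominal rate i_j = max (psi pi_j) (-mu);
  expectations are Markov conditional expectations with
  Pr(1|1) = p, Pr(2|2) = q.\<close>

definition is_REE ::
  "real \<Rightarrow> real \<Rightarrow> real \<Rightarrow> real \<Rightarrow> real \<Rightarrow> real \<Rightarrow> real \<Rightarrow> real \<Rightarrow> real
   \<Rightarrow> real \<Rightarrow> real \<Rightarrow> real \<Rightarrow> real \<Rightarrow> bool" where
  "is_REE \<beta> \<sigma> lam \<mu> \<psi> p q \<epsilon>1 \<epsilon>2 x1 \<pi>1 x2 \<pi>2 \<longleftrightarrow>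
     (let i1 = max (\<psi> * \<pi>1) (- \<mu>);
          i2 = max (\<psi> * \<pi>2) (- \<mu>);
          xe1 = p * x1 + (1 - p) * x2;
          pie1 = p * \<pi>1 + (1 - p) * \<pi>2;
          xe2 = (1 - q) * x1 + q * x2;
          pie2 = (1 - q) * \<pi>1 + q * \<pi>2
      in x1 = xe1 - \<sigma> * (i1 - pie1) + \<epsilon>1 \<and>
         \<pi>1 = lam * x1 + \<beta> * pie1 \<and>
         x2 = xe2 - \<sigma> * (i2 - pie2) + \<epsilon>2 \<and>
         \<pi>2 = lam * x2 + \<beta> * pie2)"

definition REE_exists ::
  "real \<Rightarrow> real \<Rightarrow> real \<Rightarrow> real \<Rightarrow> real \<Rightarrow> real \<Rightarrow> real \<Rightarrow> real \<Rightarrow> real \<Rightarrow> bool" where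
  "REE_exists \<beta> \<sigma> lam \<mu> \<psi> p q \<epsilon>1 \<epsilon>2 \<longleftrightarrow>
     (\<exists>x1 \<pi>1 x2 \<pi>2. is_REE \<beta> \<sigma> lam \<mu> \<psi> p q \<epsilon>1 \<epsilon>2 x1 \<pi>1 x2 \<pi>2)"

end

theory Submission
  imports Defs
begin

(* Solving the Phillips curves for the output gaps reduces an REE to two equations in the
   inflation rates: \<epsilon>1 = c (1 - p) (\<pi>1 - \<pi>2) + R \<pi>1 and \<epsilon>2 = c (1 - q) (\<pi>2 - \<pi>1) + R \<pi>2,
   where c > 0 and R \<pi> = \<sigma> (max (\<psi> \<pi>) (-\<mu>) - \<pi>) is piecewise linear with slope
   \<sigma> (\<psi> - 1) > 0 on the right.
   If q < 1, the second equation gives \<pi>1 as a function of \<pi>2, so the admissible \<epsilon>1 form the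
   range of a continuous function of \<pi>2 that tends to +\<infinity> and is affine near -\<infinity>; such a range
   is either all of \<real> or [min, \<infinity>).
   If q = 1, the second equation reads \<epsilon>2 = R \<pi>2; its largest root \<epsilon>2 / (\<sigma> (\<psi> - 1)),
   which exists because \<epsilon>2 \<ge> 0, shifts the range of \<pi>1 \<mapsto> c (1 - p) \<pi>1 + R \<pi>1, a set of
   the same kind. *)

definition is_threshold_set :: "real set \<Rightarrow> bool" where
  "is_threshold_set S \<longleftrightarrow> (\<exists>e::ereal. e < \<infinity> \<and> (\<forall>y. y \<in> S \<longleftrightarrow> e \<le> ereal y))"

lemma is_threshold_set_upward_closed:
  assumes "is_threshold_set S" "x \<in> S" "x \<le> y"
  shows "y \<in> S"
  using assms unfolding is_threshold_set_def by (meson ereal_less_eq(3) order_trans)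

lemma is_threshold_set_shift:
  assumes "is_threshold_set S"
  shows "is_threshold_set {y. y + d \<in> S}"
proof -
  obtain e where e: "e < \<infinity>" "\<And>y. y \<in> S \<longleftrightarrow> e \<le> ereal y"
    using assms unfolding is_threshold_set_def by blast
  have "y + d \<in> S \<longleftrightarrow> e - ereal d \<le> ereal y" for y
    unfolding e(2) using e(1) by (cases e) auto
  moreover have "e - ereal d < \<infinity>"
    using e(1) by (cases e) auto
  ultimately show ?thesis
    unfolding is_threshold_set_def by auto
qed

lemma filterlim_affine_at_bot:
  fixes \<alpha> \<gamma> :: real
  shows "\<alpha> > 0 \<Longrightarrow> filterlim (\<lambda>s. \<alpha> * s + \<gamma>) at_bot at_bot"
    and "\<alpha> < 0 \<Longrightarrow> filterlim (\<lambda>s. \<alpha> * s + \<gamma>) at_top at_bot"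
proof -
  show "filterlim (\<lambda>s. \<alpha> * s + \<gamma>) at_bot at_bot" if "\<alpha> > 0"
    unfolding filterlim_at_bot eventually_at_bot_linorder
  proof
    fix Z show "\<exists>N. \<forall>s\<le>N. \<alpha> * s + \<gamma> \<le> Z"
      using that by (intro exI[of _ "(Z - \<gamma>) / \<alpha>"]) (auto simp: field_simps)
  qed
  show "filterlim (\<lambda>s. \<alpha> * s + \<gamma>) at_top at_bot" if "\<alpha> < 0"
    unfolding filterlim_at_top eventually_at_bot_linorder
  proof
    fix Z show "\<exists>N. \<forall>s\<le>N. Z \<le> \<alpha> * s + \<gamma>"
      using that by (intro exI[of _ "(Z - \<gamma>) / \<alpha>"]) (auto simp: field_simps)
  qed
qed

lemma filterlim_at_top_if_affine_minorant:
  fixes f :: "real \<Rightarrow> real"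
  assumes "\<alpha> > 0" and "\<And>s. \<alpha> * s + \<gamma> \<le> f s"
  shows "filterlim f at_top at_top"
proof (rule filterlim_at_top_mono)
  show "filterlim (\<lambda>s. \<alpha> * s + \<gamma>) at_top at_top"
    unfolding filterlim_at_top eventually_at_top_linorder
  proof
    fix Z show "\<exists>N. \<forall>s\<ge>N. Z \<le> \<alpha> * s + \<gamma>"
      using assms(1) by (intro exI[of _ "(Z - \<gamma>) / \<alpha>"]) (auto simp: field_simps)
  qed
  show "eventually (\<lambda>s. \<alpha> * s + \<gamma> \<le> f s) at_top"
    using assms(2) by simp
qed

lemma eventually_affine_at_bot_compose_affine:
  fixes h :: "real \<Rightarrow> real"
  assumes bot: "eventually (\<lambda>x. h x = A\<^sub>1 * x + B\<^sub>1) at_bot"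
    and top: "eventually (\<lambda>x. h x = A\<^sub>2 * x + B\<^sub>2) at_top"
  shows "\<exists>A B. eventually (\<lambda>s. h (\<alpha> * s + \<gamma>) = A * s + B) at_bot"
proof -
  consider "\<alpha> > 0" | "\<alpha> < 0" | "\<alpha> = 0" by linarith
  then show ?thesis
  proof cases
    case 1
    have "eventually (\<lambda>s. h (\<alpha> * s + \<gamma>) = A\<^sub>1 * (\<alpha> * s + \<gamma>) + B\<^sub>1) at_bot"
      using bot filterlim_affine_at_bot(1)[OF 1] by (rule eventually_compose_filterlim)
    then have "eventually (\<lambda>s. h (\<alpha> * s + \<gamma>) = (A\<^sub>1 * \<alpha>) * s + (A\<^sub>1 * \<gamma> + B\<^sub>1)) at_bot"
      by (simp add: algebra_simps)
    then show ?thesis by blast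
  next
    case 2
    have "eventually (\<lambda>s. h (\<alpha> * s + \<gamma>) = A\<^sub>2 * (\<alpha> * s + \<gamma>) + B\<^sub>2) at_bot"
      using top filterlim_affine_at_bot(2)[OF 2] by (rule eventually_compose_filterlim)
    then have "eventually (\<lambda>s. h (\<alpha> * s + \<gamma>) = (A\<^sub>2 * \<alpha>) * s + (A\<^sub>2 * \<gamma> + B\<^sub>2)) at_bot"
      by (simp add: algebra_simps)
    then show ?thesis by blast
  next
    case 3
    then show ?thesis by (intro exI[of _ 0] exI[of _ "h \<gamma>"]) simp
  qed
qed

lemma filterlim_at_top_solution_branch:
  fixes h :: "real \<Rightarrow> real"
  assumes "0 < k" "0 \<le> a" "0 < b" and h_ge: "\<And>x. k * x \<le> h x"
  shows "filterlim (\<lambda>s. a * ((h s - \<epsilon>) / b) + h (s + (h s - \<epsilon>) / b)) at_top at_top"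
proof (rule filterlim_at_top_if_affine_minorant)
  show "0 < a * k / b + k + k * k / b"
    using assms by (smt (verit) divide_nonneg_pos mult_nonneg_nonneg)
  fix s
  have "a * ((k * s - \<epsilon>) / b) \<le> a * ((h s - \<epsilon>) / b)"
    using h_ge assms by (simp add: mult_left_mono divide_right_mono)
  moreover have "s + (k * s - \<epsilon>) / b \<le> s + (h s - \<epsilon>) / b"
    using h_ge \<open>0 < b\<close> by (simp add: divide_right_mono)
  then have "k * (s + (k * s - \<epsilon>) / b) \<le> h (s + (h s - \<epsilon>) / b)"
    using h_ge[of "s + (h s - \<epsilon>) / b"] \<open>0 < k\<close> by (smt (verit) mult_left_mono)
  moreover have "(a * k / b + k + k * k / b) * s + (- a * \<epsilon> / b - k * \<epsilon> / b) =
      a * ((k * s - \<epsilon>) / b) + k * (s + (k * s - \<epsilon>) / b)"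
    using \<open>0 < b\<close> by (simp add: field_simps)
  ultimately show "(a * k / b + k + k * k / b) * s + (- a * \<epsilon> / b - k * \<epsilon> / b) \<le>
      a * ((h s - \<epsilon>) / b) + h (s + (h s - \<epsilon>) / b)"
    by linarith
qed

lemma in_range_if_above_value:
  fixes f :: "real \<Rightarrow> real"
  assumes cont: "continuous_on UNIV f" and top: "filterlim f at_top at_top"
    and "f a \<le> y"
  shows "y \<in> range f"
proof -
  have "eventually (\<lambda>s. a \<le> s \<and> y \<le> f s) at_top"
    using top by (auto simp: filterlim_at_top intro: eventually_conj)
  then obtain b where "a \<le> b" "y \<le> f b"
    by (auto simp: eventually_at_top_linorder)
  then obtain s where "f s = y"
    using IVT'[of f a y b] \<open>f a \<le> y\<close> continuous_on_subset[OF cont] by blast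
  then show ?thesis by blast
qed

lemma continuous_attains_global_min:
  fixes f :: "real \<Rightarrow> real"
  assumes cont: "continuous_on UNIV f" and top: "filterlim f at_top at_top"
    and left_tail: "\<And>s. s \<le> T \<Longrightarrow> f T \<le> f s"
  obtains m where "\<And>s. f m \<le> f s"
proof -
  obtain T' where T': "\<And>s. T' \<le> s \<Longrightarrow> f T \<le> f s"
    using top by (auto simp: filterlim_at_top eventually_at_top_linorder)
  have "\<exists>m\<in>{T..max T T'}. \<forall>s\<in>{T..max T T'}. f m \<le> f s"
    by (rule continuous_attains_inf) (auto intro: continuous_on_subset[OF cont])
  then obtain m where m: "\<And>s. s \<in> {T..max T T'} \<Longrightarrow> f m \<le> f s"
    by blast
  have "f m \<le> f s" for s
  proof (cases "s \<in> {T..max T T'}")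
    case True
    then show ?thesis using m by blast
  next
    case False
    then have "s \<le> T \<or> T' \<le> s" by auto
    then have "f T \<le> f s" using left_tail T' by blast
    moreover have "f m \<le> f T" using m by simp
    ultimately show ?thesis by linarith
  qed
  then show thesis by (rule that)
qed

lemma is_threshold_set_range:
  fixes f :: "real \<Rightarrow> real"
  assumes cont: "continuous_on UNIV f" and top: "filterlim f at_top at_top"
    and bot: "eventually (\<lambda>s. f s = A * s + B) at_bot"
  shows "is_threshold_set (range f)"
proof (cases "A > 0")
  case True
  have "y \<in> range f" for y
  proof -
    have "eventually (\<lambda>s. A * s + B \<le> y) at_bot"
      using filterlim_affine_at_bot(1)[OF True] by (simp add: filterlim_at_bot)
    then have "eventually (\<lambda>s. f s \<le> y) at_bot"
      using bot by eventually_elim simp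
    then obtain a where "f a \<le> y"
      by (auto simp: eventually_at_bot_linorder)
    then show ?thesis using in_range_if_above_value[OF cont top] by blast
  qed
  then show ?thesis
    unfolding is_threshold_set_def by (intro exI[of _ "-\<infinity>"]) auto
next
  case False
  obtain T where T: "\<And>s. s \<le> T \<Longrightarrow> f s = A * s + B"
    using bot by (auto simp: eventually_at_bot_linorder)
  have "f T \<le> f s" if "s \<le> T" for s
    using T[OF that] T[of T] False that by (simp add: mult_left_mono_neg)
  then obtain m where global_min: "\<And>s. f m \<le> f s"
    using continuous_attains_global_min[OF cont top] by blast
  have range_iff: "y \<in> range f \<longleftrightarrow> f m \<le> y" for y
  proof
    show "y \<in> range f \<Longrightarrow> f m \<le> y" using global_min by blast
    show "f m \<le> y \<Longrightarrow> y \<in> range f" by (rule in_range_if_above_value[OF cont top])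
  qed
  show ?thesis
    unfolding is_threshold_set_def
  proof (intro exI conjI allI)
    show "ereal (f m) < \<infinity>" by simp
    show "y \<in> range f \<longleftrightarrow> ereal (f m) \<le> ereal y" for y
      using range_iff by simp
  qed
qed

definition real_rate_term :: "real \<Rightarrow> real \<Rightarrow> real \<Rightarrow> real \<Rightarrow> real" where
  "real_rate_term \<sigma> \<psi> \<mu> \<pi> = \<sigma> * (max (\<psi> * \<pi>) (- \<mu>) - \<pi>)"

lemma real_rate_term_ge:
  assumes "0 \<le> \<sigma>"
  shows "\<sigma> * (\<psi> - 1) * \<pi> \<le> real_rate_term \<sigma> \<psi> \<mu> \<pi>"
proof -
  have "\<sigma> * (\<psi> * \<pi>) \<le> \<sigma> * max (\<psi> * \<pi>) (- \<mu>)"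
    using assms by (intro mult_left_mono) simp_all
  then show ?thesis
    unfolding real_rate_term_def by (simp add: algebra_simps)
qed

lemma real_rate_term_active: "- \<mu> \<le> \<psi> * \<pi> \<Longrightarrow> real_rate_term \<sigma> \<psi> \<mu> \<pi> = \<sigma> * (\<psi> - 1) * \<pi>"
  unfolding real_rate_term_def by (simp add: algebra_simps)

lemma real_rate_term_bound: "\<psi> * \<pi> \<le> - \<mu> \<Longrightarrow> real_rate_term \<sigma> \<psi> \<mu> \<pi> = - \<sigma> * \<pi> - \<sigma> * \<mu>"
  unfolding real_rate_term_def by (simp add: algebra_simps max_absorb2)

lemma real_rate_term_root:
  assumes "0 < \<sigma>" "1 < \<psi>" "0 \<le> \<mu>" "0 \<le> \<epsilon>"
  shows "real_rate_term \<sigma> \<psi> \<mu> (\<epsilon> / (\<sigma> * (\<psi> - 1))) = \<epsilon>"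
proof -
  have "0 \<le> \<psi> * (\<epsilon> / (\<sigma> * (\<psi> - 1)))"
    using assms by simp
  then have "- \<mu> \<le> \<psi> * (\<epsilon> / (\<sigma> * (\<psi> - 1)))"
    using \<open>0 \<le> \<mu>\<close> by linarith
  then show ?thesis
    using assms by (simp add: real_rate_term_active)
qed

lemma real_rate_term_root_le:
  assumes "0 < \<sigma>" "1 < \<psi>" "0 \<le> \<mu>" "0 \<le> \<epsilon>" "real_rate_term \<sigma> \<psi> \<mu> \<pi> = \<epsilon>"
  shows "\<pi> \<le> \<epsilon> / (\<sigma> * (\<psi> - 1))"
proof (cases "- \<mu> \<le> \<psi> * \<pi>")
  case True
  then show ?thesis
    using assms by (simp add: real_rate_term_active field_simps)
next
  case False
  then have "\<psi> * \<pi> < 0" using \<open>0 \<le> \<mu>\<close> by linarith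
  then have "\<pi> < 0" using \<open>1 < \<psi>\<close> by (simp add: mult_less_0_iff)
  moreover have "0 \<le> \<epsilon> / (\<sigma> * (\<psi> - 1))" using assms by simp
  ultimately show ?thesis by linarith
qed

lemma continuous_on_real_rate_term [continuous_intros]:
  "continuous_on S f \<Longrightarrow> continuous_on S (\<lambda>x. real_rate_term \<sigma> \<psi> \<mu> (f x))"
  unfolding real_rate_term_def by (intro continuous_intros)

lemma eventually_real_rate_term_at_bot:
  "0 < \<psi> \<Longrightarrow> eventually (\<lambda>\<pi>. real_rate_term \<sigma> \<psi> \<mu> \<pi> = - \<sigma> * \<pi> - \<sigma> * \<mu>) at_bot"
  unfolding eventually_at_bot_linorder
  by (intro exI[of _ "- \<mu> / \<psi>"]) (auto simp: real_rate_term_bound field_simps)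

lemma eventually_real_rate_term_at_top:
  "0 < \<psi> \<Longrightarrow> eventually (\<lambda>\<pi>. real_rate_term \<sigma> \<psi> \<mu> \<pi> = \<sigma> * (\<psi> - 1) * \<pi>) at_top"
  unfolding eventually_at_top_linorder
  by (intro exI[of _ "- \<mu> / \<psi>"]) (auto simp: real_rate_term_active field_simps)

lemma is_REE_iff:
  assumes "lam \<noteq> 0"
  shows "is_REE \<beta> \<sigma> lam \<mu> \<psi> p q e1 e2 x1 \<pi>1 x2 \<pi>2 \<longleftrightarrow>
    x1 = (\<pi>1 - \<beta> * (p * \<pi>1 + (1 - p) * \<pi>2)) / lam \<and>
    x2 = (\<pi>2 - \<beta> * ((1 - q) * \<pi>1 + q * \<pi>2)) / lam \<and>
    e1 = ((1 - \<beta> * (p + q - 1)) / lam + \<sigma>) * (1 - p) * (\<pi>1 - \<pi>2) + real_rate_term \<sigma> \<psi> \<mu> \<pi>1 \<and>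
    e2 = ((1 - \<beta> * (p + q - 1)) / lam + \<sigma>) * (1 - q) * (\<pi>2 - \<pi>1) + real_rate_term \<sigma> \<psi> \<mu> \<pi>2"
    (is "_ \<longleftrightarrow> x1 = ?X1 \<and> x2 = ?X2 \<and> _")
proof -
  define d where "d = (1 - \<beta> * (p + q - 1)) / lam"
  have phillips: "\<pi>1 = lam * x1 + \<beta> * (p * \<pi>1 + (1 - p) * \<pi>2) \<longleftrightarrow> x1 = ?X1"
    "\<pi>2 = lam * x2 + \<beta> * ((1 - q) * \<pi>1 + q * \<pi>2) \<longleftrightarrow> x2 = ?X2"
    using assms by (auto simp: field_simps)
  have IS: "x1 = p * x1 + (1 - p) * x2 - \<sigma> * (i1 - (p * \<pi>1 + (1 - p) * \<pi>2)) + e1 \<longleftrightarrow>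
      e1 = (1 - p) * (x1 - x2) + \<sigma> * (1 - p) * (\<pi>1 - \<pi>2) + \<sigma> * (i1 - \<pi>1)"
    "x2 = (1 - q) * x1 + q * x2 - \<sigma> * (i2 - ((1 - q) * \<pi>1 + q * \<pi>2)) + e2 \<longleftrightarrow>
      e2 = (1 - q) * (x2 - x1) + \<sigma> * (1 - q) * (\<pi>2 - \<pi>1) + \<sigma> * (i2 - \<pi>2)" for i1 i2
    by (auto simp: algebra_simps)
  have gap: "x1 - x2 = d * (\<pi>1 - \<pi>2) \<and> x2 - x1 = d * (\<pi>2 - \<pi>1)" if "x1 = ?X1" "x2 = ?X2"
    using that assms unfolding d_def by (simp add: field_simps)
  have collect: "(1 - r) * D + \<sigma> * (1 - r) * \<Delta> = (d + \<sigma>) * (1 - r) * \<Delta>"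
    if "D = d * \<Delta>" for r D \<Delta>
    using that by (simp add: algebra_simps)
  show ?thesis
    unfolding is_REE_def real_rate_term_def Let_def phillips IS d_def[symmetric]
    using gap collect by metis
qed

lemma REE_exists_iff:
  assumes "lam \<noteq> 0"
  shows "REE_exists \<beta> \<sigma> lam \<mu> \<psi> p q e1 e2 \<longleftrightarrow> (\<exists>\<pi>1 \<pi>2.
    e1 = ((1 - \<beta> * (p + q - 1)) / lam + \<sigma>) * (1 - p) * (\<pi>1 - \<pi>2) + real_rate_term \<sigma> \<psi> \<mu> \<pi>1 \<and>
    e2 = ((1 - \<beta> * (p + q - 1)) / lam + \<sigma>) * (1 - q) * (\<pi>2 - \<pi>1) + real_rate_term \<sigma> \<psi> \<mu> \<pi>2)"
  unfolding REE_exists_def is_REE_iff[OF assms] by blast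

lemma is_threshold_set_nonabsorbing:
  assumes "0 < \<sigma>" "1 < \<psi>" "0 \<le> a" "0 < b"
  shows "is_threshold_set {y. \<exists>\<pi>1 \<pi>2. y = a * (\<pi>1 - \<pi>2) + real_rate_term \<sigma> \<psi> \<mu> \<pi>1 \<and>
                                      \<epsilon> = b * (\<pi>2 - \<pi>1) + real_rate_term \<sigma> \<psi> \<mu> \<pi>2}"
    (is "is_threshold_set ?S")
proof -
  let ?R = "real_rate_term \<sigma> \<psi> \<mu>"
  have "0 < \<psi>" using \<open>1 < \<psi>\<close> by simp
  define P where "P s = s + (?R s - \<epsilon>) / b" for s
  define G where "G s = a * (P s - s) + ?R (P s)" for s
  have "\<epsilon> = b * (\<pi>2 - \<pi>1) + ?R \<pi>2 \<longleftrightarrow> \<pi>1 = P \<pi>2" for \<pi>1 \<pi>2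
    unfolding P_def using \<open>0 < b\<close> by (simp add: field_simps)
  then have S_eq: "?S = range G"
    unfolding G_def by auto
  have "continuous_on UNIV G"
    unfolding G_def P_def using \<open>0 < b\<close> by (intro continuous_intros) auto
  moreover have "filterlim G at_top at_top"
  proof -
    have "G = (\<lambda>s. a * ((?R s - \<epsilon>) / b) + ?R (s + (?R s - \<epsilon>) / b))"
      unfolding G_def P_def by simp
    moreover have "\<sigma> * (\<psi> - 1) * x \<le> ?R x" for x
      using real_rate_term_ge \<open>0 < \<sigma>\<close> by simp
    ultimately show ?thesis
      using filterlim_at_top_solution_branch[of "\<sigma> * (\<psi> - 1)" a b ?R] assms by simp
  qed
  moreover have "\<exists>A B. eventually (\<lambda>s. G s = A * s + B) at_bot"
  proof -
    define \<alpha> where "\<alpha> = 1 - \<sigma> / b"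
    define \<gamma> where "\<gamma> = - (\<sigma> * \<mu> + \<epsilon>) / b"
    have "eventually (\<lambda>x. ?R x = (- \<sigma>) * x + (- \<sigma> * \<mu>)) at_bot"
      "eventually (\<lambda>x. ?R x = (\<sigma> * (\<psi> - 1)) * x + 0) at_top"
      using eventually_real_rate_term_at_bot[OF \<open>0 < \<psi>\<close>]
        eventually_real_rate_term_at_top[OF \<open>0 < \<psi>\<close>] by simp_all
    then obtain A B where "eventually (\<lambda>s. ?R (\<alpha> * s + \<gamma>) = A * s + B) at_bot"
      using eventually_affine_at_bot_compose_affine by blast
    moreover have "eventually (\<lambda>s. P s = \<alpha> * s + \<gamma>) at_bot"
      using eventually_real_rate_term_at_bot[OF \<open>0 < \<psi>\<close>, of \<sigma> \<mu>]
      by eventually_elim (use \<open>0 < b\<close> in \<open>simp add: P_def, simp add: \<alpha>_def \<gamma>_def field_simps\<close>)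
    ultimately have "eventually (\<lambda>s. G s = (a * (\<alpha> - 1) + A) * s + (a * \<gamma> + B)) at_bot"
      by eventually_elim (simp add: G_def algebra_simps)
    then show ?thesis by blast
  qed
  ultimately show ?thesis
    unfolding S_eq using is_threshold_set_range by blast
qed

lemma is_threshold_set_absorbing:
  assumes "0 < \<sigma>" "1 < \<psi>" "0 \<le> \<mu>" "0 \<le> a" "0 \<le> \<epsilon>"
  shows "is_threshold_set {y. \<exists>\<pi>1 \<pi>2. y = a * (\<pi>1 - \<pi>2) + real_rate_term \<sigma> \<psi> \<mu> \<pi>1 \<and>
                                      \<epsilon> = real_rate_term \<sigma> \<psi> \<mu> \<pi>2}"
    (is "is_threshold_set ?S")
proof -
  let ?R = "real_rate_term \<sigma> \<psi> \<mu>"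
  have "0 < \<psi>" using \<open>1 < \<psi>\<close> by simp
  define K where "K s = a * s + ?R s" for s
  define r where "r = \<epsilon> / (\<sigma> * (\<psi> - 1))"
  have "is_threshold_set (range K)"
  proof (rule is_threshold_set_range)
    show "continuous_on UNIV K"
      unfolding K_def by (intro continuous_intros)
    show "filterlim K at_top at_top"
    proof (rule filterlim_at_top_if_affine_minorant)
      show "0 < a + \<sigma> * (\<psi> - 1)" using assms by (simp add: add_nonneg_pos)
      show "(a + \<sigma> * (\<psi> - 1)) * s + 0 \<le> K s" for s
        unfolding K_def using real_rate_term_ge[of \<sigma> \<psi> s \<mu>] \<open>0 < \<sigma>\<close> by (simp add: algebra_simps)
    qed
    show "eventually (\<lambda>s. K s = (a - \<sigma>) * s + - \<sigma> * \<mu>) at_bot"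
      using eventually_real_rate_term_at_bot[OF \<open>0 < \<psi>\<close>, of \<sigma> \<mu>]
      by eventually_elim (simp add: K_def algebra_simps)
  qed
  have "?R r = \<epsilon>"
    unfolding r_def using assms(1-3,5) by (rule real_rate_term_root)
  have r_max: "\<pi>2 \<le> r" if "?R \<pi>2 = \<epsilon>" for \<pi>2
    unfolding r_def using assms(1-3,5) that by (rule real_rate_term_root_le)
  have "?S = {y. y + a * r \<in> range K}"
  proof safe
    fix \<pi>1 \<pi>2 assume "\<epsilon> = ?R \<pi>2"
    have "a * \<pi>2 \<le> a * r"
      using r_max[OF \<open>\<epsilon> = ?R \<pi>2\<close>[symmetric]] \<open>0 \<le> a\<close> by (rule mult_left_mono)
    then have "K \<pi>1 \<le> a * (\<pi>1 - \<pi>2) + ?R \<pi>1 + a * r"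
      unfolding K_def by (simp add: algebra_simps)
    then show "a * (\<pi>1 - \<pi>2) + ?R \<pi>1 + a * r \<in> range K"
      using is_threshold_set_upward_closed[OF \<open>is_threshold_set (range K)\<close>] by blast
  next
    fix y s assume "y + a * r = K s"
    then have "y = a * (s - r) + ?R s \<and> \<epsilon> = ?R r"
      using \<open>?R r = \<epsilon>\<close> unfolding K_def by (simp add: algebra_simps)
    then show "\<exists>\<pi>1 \<pi>2. y = a * (\<pi>1 - \<pi>2) + ?R \<pi>1 \<and> \<epsilon> = ?R \<pi>2" by blast
  qed
  then show ?thesis
    using is_threshold_set_shift[OF \<open>is_threshold_set (range K)\<close>] by simp
qed

theorem proposition1:
  fixes \<beta> \<sigma> lam \<mu> \<psi> p q \<epsilon>2 :: real
  assumes "0 < \<beta>" "\<beta> < 1" "0 < \<sigma>" "0 < lam" "0 < \<mu>" "1 < \<psi>"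
    and "0 < p" "p \<le> 1" "0 < q" "q \<le> 1"
    and "0 \<le> \<epsilon>2"
  shows "\<exists>\<epsilon>bar :: ereal. \<epsilon>bar < \<infinity> \<and>
           (\<forall>\<epsilon>1 :: real. REE_exists \<beta> \<sigma> lam \<mu> \<psi> p q \<epsilon>1 \<epsilon>2 \<longleftrightarrow> ereal \<epsilon>1 \<ge> \<epsilon>bar)"
proof -
  define c where "c = (1 - \<beta> * (p + q - 1)) / lam + \<sigma>"
  have "\<beta> * (p + q - 1) \<le> \<beta> * 1"
    using assms by (intro mult_left_mono) auto
  then have "0 < 1 - \<beta> * (p + q - 1)"
    using assms by linarith
  then have "0 < c"
    unfolding c_def using assms by (intro add_pos_pos divide_pos_pos)
  have "lam \<noteq> 0" using assms by simp
  have REE: "{\<epsilon>1. REE_exists \<beta> \<sigma> lam \<mu> \<psi> p q \<epsilon>1 \<epsilon>2} =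
      {y. \<exists>\<pi>1 \<pi>2. y = c * (1 - p) * (\<pi>1 - \<pi>2) + real_rate_term \<sigma> \<psi> \<mu> \<pi>1 \<and>
                   \<epsilon>2 = c * (1 - q) * (\<pi>2 - \<pi>1) + real_rate_term \<sigma> \<psi> \<mu> \<pi>2}"
    unfolding REE_exists_iff[OF \<open>lam \<noteq> 0\<close>] c_def by simp
  have "is_threshold_set {\<epsilon>1. REE_exists \<beta> \<sigma> lam \<mu> \<psi> p q \<epsilon>1 \<epsilon>2}"
  proof (cases "q < 1")
    case True
    then show ?thesis
      unfolding REE using \<open>0 < c\<close> assms by (intro is_threshold_set_nonabsorbing) simp_all
  next
    case False
    then have "q = 1" using assms by simp
    then show ?thesis
      unfolding REE using \<open>0 < c\<close> assms by (simp add: is_threshold_set_absorbing)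
  qed
  then show ?thesis
    unfolding is_threshold_set_def by simp
qed

end
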